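(* Let $d$ be an integer and let $G$ be a finite connected $d$-regular simple graph containing no cycle of length $3$ and no cycle of length $5$ as a subgraph. If $\kappa_{LLY}(x,y)>0$ for every edge $xy$ of $G$, then $\kappa_{LLY}(x,y)=2/d$ for every edge $xy$ of $G$.
   Context: For vertices $u,v$ of a connected graph $G$, $d(u,v)$ is the graph distance, $N(v)$ is the neighborhood of $v$, $d_v=|N(v)|$. For $0\le\alpha<1$, the $\alpha$-lazy random walk is $m_x^\alpha(x)=\alpha$, $m_x^\alpha(v)=(1-\alpha)/d_x$ for $v\in N(x)$, $m_x^\alpha(v)=0$ otherwise. The transportation distance between probability distributions $m_1,m_2$ on $V(G)$ is $W(m_1,m_2)=\inf_A\sum_{x,y}A(x,y)d(x,y)$ over couplings $A:V\times V\to[0,1]$ with $\sum_yA(x,y)=m_1(x)$, $\sum_xA(x,y)=m_2(y)$. For distinct $x,y$, $\kappa_\alpha(x,y)=1-W(m_x^\alpha,m_y^\alpha)/d(x,y)$ and $\kappa_{LLY}(x,y)=\lim_{\alpha\to1}\kappa_\alpha(x,y)/(1-\alpha)$. *)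

theory Defs
  imports "HOL-Analysis.Analysis"
begin

definition simple_graph :: "'a set \<Rightarrow> ('a \<Rightarrow> 'a \<Rightarrow> bool) \<Rightarrow> bool" where
  "simple_graph V E \<longleftrightarrow> finite V \<and> (\<forall>x y. E x y \<longrightarrow> x \<in> V \<and> y \<in> V)
     \<and> (\<forall>x y. E x y \<longrightarrow> E y x) \<and> (\<forall>x. \<not> E x x)"

definition nbrs :: "'a set \<Rightarrow> ('a \<Rightarrow> 'a \<Rightarrow> bool) \<Rightarrow> 'a \<Rightarrow> 'a set" where
  "nbrs V E v = {u \<in> V. E v u}"

definition deg :: "'a set \<Rightarrow> ('a \<Rightarrow> 'a \<Rightarrow> bool) \<Rightarrow> 'a \<Rightarrow> nat" where
  "deg V E v = card (nbrs V E v)"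

definition regular :: "'a set \<Rightarrow> ('a \<Rightarrow> 'a \<Rightarrow> bool) \<Rightarrow> nat \<Rightarrow> bool" where
  "regular V E d \<longleftrightarrow> (\<forall>v\<in>V. deg V E v = d)"

text \<open>A walk of length n from x to y: a list of n+1 vertices with consecutive adjacent.\<close>
definition walk :: "'a set \<Rightarrow> ('a \<Rightarrow> 'a \<Rightarrow> bool) \<Rightarrow> 'a list \<Rightarrow> bool" where
  "walk V E p \<longleftrightarrow> p \<noteq> [] \<and> set p \<subseteq> V \<and> (\<forall>i < length p - 1. E (p ! i) (p ! Suc i))"

definition connected_graph :: "'a set \<Rightarrow> ('a \<Rightarrow> 'a \<Rightarrow> bool) \<Rightarrow> bool" where
  "connected_graph V E \<longleftrightarrow> V \<noteq> {} \<and>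
     (\<forall>x\<in>V. \<forall>y\<in>V. \<exists>p. walk V E p \<and> hd p = x \<and> last p = y)"

definition gdist :: "'a set \<Rightarrow> ('a \<Rightarrow> 'a \<Rightarrow> bool) \<Rightarrow> 'a \<Rightarrow> 'a \<Rightarrow> nat" where
  "gdist V E x y = (LEAST n. \<exists>p. walk V E p \<and> hd p = x \<and> last p = y \<and> length p = Suc n)"

definition has_cycle :: "'a set \<Rightarrow> ('a \<Rightarrow> 'a \<Rightarrow> bool) \<Rightarrow> nat \<Rightarrow> bool" where
  "has_cycle V E k \<longleftrightarrow> (\<exists>c :: nat \<Rightarrow> 'a. inj_on c {..<k} \<and> c ` {..<k} \<subseteq> V \<and>
      (\<forall>i<k. E (c i) (c (Suc i mod k))))"

definition lazy_walk :: "'a set \<Rightarrow> ('a \<Rightarrow> 'a \<Rightarrow> bool) \<Rightarrow> real \<Rightarrow> 'a \<Rightarrow> 'a \<Rightarrow> real" where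
  "lazy_walk V E \<alpha> x v = (if v = x then \<alpha>
      else if v \<in> nbrs V E x then (1 - \<alpha>) / real (deg V E x) else 0)"

definition coupling :: "'a set \<Rightarrow> ('a \<Rightarrow> real) \<Rightarrow> ('a \<Rightarrow> real) \<Rightarrow> ('a \<Rightarrow> 'a \<Rightarrow> real) \<Rightarrow> bool" where
  "coupling V m1 m2 A \<longleftrightarrow> (\<forall>x y. 0 \<le> A x y \<and> A x y \<le> 1)
     \<and> (\<forall>x y. (x \<notin> V \<or> y \<notin> V) \<longrightarrow> A x y = 0)
     \<and> (\<forall>x\<in>V. (\<Sum>y\<in>V. A x y) = m1 x)
     \<and> (\<forall>y\<in>V. (\<Sum>x\<in>V. A x y) = m2 y)"

definition transport :: "'a set \<Rightarrow> ('a \<Rightarrow> 'a \<Rightarrow> bool) \<Rightarrow> ('a \<Rightarrow> real) \<Rightarrow> ('a \<Rightarrow> real) \<Rightarrow> real" where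
  "transport V E m1 m2 = Inf {(\<Sum>x\<in>V. \<Sum>y\<in>V. A x y * real (gdist V E x y)) | A. coupling V m1 m2 A}"

definition kappa_alpha :: "'a set \<Rightarrow> ('a \<Rightarrow> 'a \<Rightarrow> bool) \<Rightarrow> real \<Rightarrow> 'a \<Rightarrow> 'a \<Rightarrow> real" where
  "kappa_alpha V E \<alpha> x y =
     1 - transport V E (lazy_walk V E \<alpha> x) (lazy_walk V E \<alpha> y) / real (gdist V E x y)"

definition kappa_LLY :: "'a set \<Rightarrow> ('a \<Rightarrow> 'a \<Rightarrow> bool) \<Rightarrow> 'a \<Rightarrow> 'a \<Rightarrow> real" where
  "kappa_LLY V E x y = Lim (at_left (1::real)) (\<lambda>\<alpha>. kappa_alpha V E \<alpha> x y / (1 - \<alpha>))"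

end

theory Submission
  imports Defs
begin

text \<open>Fix an edge \<open>xy\<close> and put \<open>N\<^sub>x = N(x) - {y}\<close>, \<open>N\<^sub>y = N(y) - {x}\<close>. Without triangles
  these sets are disjoint and each \<open>u \<in> N\<^sub>x\<close> has distance 2 to \<open>y\<close> (symmetrically for \<open>N\<^sub>y\<close>);
  without pentagons, \<open>u \<in> N\<^sub>x\<close> and \<open>w \<in> N\<^sub>y\<close> are adjacent or at distance at least 3.
  Test functions taking the values 1 at \<open>x\<close>, 0 at \<open>y\<close>, values in \<open>[0, 2]\<close> on \<open>N\<^sub>x\<close> and in
  \<open>[-1, 1]\<close> on \<open>N\<^sub>y\<close> are then 1-Lipschitz between the supports of the two walks, and
  Kantorovich duality gives \<open>W(m\<^sub>x\<^sup>\<alpha>, m\<^sub>y\<^sup>\<alpha>) \<ge> 1 - 2(1 - \<alpha>)/d\<close>, and even \<open>W \<ge> 1\<close> when some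
  \<open>S \<subseteq> N\<^sub>x\<close> has fewer than \<open>|S|\<close> neighbours in \<open>N\<^sub>y\<close>. By Hall's theorem the alternative is a
  perfect matching \<open>N\<^sub>x \<rightarrow> N\<^sub>y\<close>, which yields a coupling attaining the first bound for \<open>\<alpha>\<close> near 1,
  so \<open>\<kappa>\<^sub>L\<^sub>L\<^sub>Y(x, y) = 2/d\<close>. In the Hall-violating case \<open>\<kappa>\<^sub>\<alpha> \<le> 0\<close> for all \<open>\<alpha>\<close>; since
  \<open>\<kappa>\<^sub>\<alpha>/(1 - \<alpha>)\<close> is nondecreasing, \<open>\<kappa>\<^sub>L\<^sub>L\<^sub>Y(x, y) \<le> 0\<close>, contradicting positivity.\<close>

section \<open>Simple graphs, short cycles and distance\<close>

lemma simple_graphD: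
  assumes "simple_graph V E"
  shows "finite V" "E a b \<Longrightarrow> a \<in> V" "E a b \<Longrightarrow> b \<in> V" "E a b \<Longrightarrow> E b a" "\<not> E a a"
  using assms unfolding simple_graph_def by blast+

lemma nbrs_irrefl: "simple_graph V E \<Longrightarrow> v \<notin> nbrs V E v"
  unfolding simple_graph_def nbrs_def by blast

lemma has_cycleI:
  assumes "length cs = k" "distinct cs" "set cs \<subseteq> V" "\<forall>i < k. E (cs ! i) (cs ! (Suc i mod k))"
  shows "has_cycle V E k"
  unfolding has_cycle_def
proof (intro exI conjI)
  show "inj_on ((!) cs) {..<k}" using assms(1,2) by (simp add: inj_on_nth)
  show "(!) cs ` {..<k} \<subseteq> V" using assms(1,3) by auto
qed (use assms(4) in auto)

lemma triangle_free:
  assumes "simple_graph V E" "\<not> has_cycle V E 3" "E a b" "E b c"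
  shows "\<not> E c a"
proof
  assume "E c a"
  have "distinct [a, b, c]" using assms(3,4) \<open>E c a\<close> simple_graphD(5)[OF assms(1)] by auto
  moreover have "set [a, b, c] \<subseteq> V" using assms(3,4) simple_graphD(2,3)[OF assms(1)] by auto
  moreover have "\<forall>i < 3. E ([a, b, c] ! i) ([a, b, c] ! (Suc i mod 3))"
  proof (intro allI impI)
    fix i :: nat assume "i < 3"
    then consider "i = 0" | "i = 1" | "i = 2" by linarith
    then show "E ([a, b, c] ! i) ([a, b, c] ! (Suc i mod 3))"
      by cases (use assms(3,4) \<open>E c a\<close> in auto)
  qed
  ultimately show False using has_cycleI[of "[a, b, c]" 3 V E] assms(2) by simp
qed

lemma pentagon_free:
  assumes "simple_graph V E" "\<not> has_cycle V E 5" "distinct [a, b, c, d, e]"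
    "E a b" "E b c" "E c d" "E d e"
  shows "\<not> E e a"
proof
  assume "E e a"
  have "set [a, b, c, d, e] \<subseteq> V" using assms(4-7) simple_graphD(2,3)[OF assms(1)] by auto
  moreover have "\<forall>i < 5. E ([a, b, c, d, e] ! i) ([a, b, c, d, e] ! (Suc i mod 5))"
  proof (intro allI impI)
    fix i :: nat assume "i < 5"
    then consider "i = 0" | "i = 1" | "i = 2" | "i = 3" | "i = 4" by linarith
    then show "E ([a, b, c, d, e] ! i) ([a, b, c, d, e] ! (Suc i mod 5))"
      by cases (use assms(4-7) \<open>E e a\<close> in auto)
  qed
  ultimately show False using has_cycleI[of "[a, b, c, d, e]" 5 V E] assms(2,3) by simp
qed

lemma gdist_le_walk:
  assumes "walk V E p" "hd p = a" "last p = b"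
  shows "gdist V E a b \<le> length p - 1"
  unfolding gdist_def
proof (rule Least_le)
  show "\<exists>q. walk V E q \<and> hd q = a \<and> last q = b \<and> length q = Suc (length p - 1)"
    using assms by (intro exI[of _ p]) (auto simp: walk_def)
qed

lemma shortest_walk_exists:
  assumes "connected_graph V E" "a \<in> V" "b \<in> V"
  shows "\<exists>p. walk V E p \<and> hd p = a \<and> last p = b \<and> length p = Suc (gdist V E a b)"
proof -
  obtain p where p: "walk V E p" "hd p = a" "last p = b"
    using assms unfolding connected_graph_def by blast
  then have "length p = Suc (length p - 1)" unfolding walk_def by (cases p) auto
  with p have "\<exists>q. walk V E q \<and> hd q = a \<and> last q = b \<and> length q = Suc (length p - 1)"
    by metis
  then show ?thesis
    unfolding gdist_def by (rule LeastI)
qed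

lemma gdist_self: "a \<in> V \<Longrightarrow> gdist V E a a = 0"
  using gdist_le_walk[of V E "[a]" a a] by (simp add: walk_def)

lemma gdist_small_cases:
  assumes "connected_graph V E" "a \<in> V" "b \<in> V"
  shows "gdist V E a b = 0 \<Longrightarrow> a = b"
    and "gdist V E a b = 1 \<Longrightarrow> E a b"
    and "gdist V E a b = 2 \<Longrightarrow> \<exists>w. E a w \<and> E w b"
proof -
  obtain p where p: "walk V E p" "hd p = a" "last p = b" "length p = Suc (gdist V E a b)"
    using shortest_walk_exists[OF assms] by blast
  then have step: "\<And>i. Suc i < length p \<Longrightarrow> E (p ! i) (p ! Suc i)" unfolding walk_def by simp
  show "a = b" if d: "gdist V E a b = 0"
  proof -
    obtain u where "p = [u]" using p(4) d by (auto simp: length_Suc_conv)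
    then show ?thesis using p(2,3) by simp
  qed
  show "E a b" if d: "gdist V E a b = 1"
  proof -
    obtain u v where "p = [u, v]" using p(4) d by (auto simp: length_Suc_conv)
    then show ?thesis using p(2,3) step[of 0] by simp
  qed
  show "\<exists>w. E a w \<and> E w b" if d: "gdist V E a b = 2"
  proof -
    obtain u v w where "p = [u, v, w]" using p(4) d by (auto simp: length_Suc_conv numeral_2_eq_2)
    then show ?thesis using p(2,3) step[of 0] step[of 1] by auto
  qed
qed

lemma gdist_edge:
  assumes "simple_graph V E" "connected_graph V E" "E a b"
  shows "gdist V E a b = 1"
proof -
  have ab: "a \<in> V" "b \<in> V" "a \<noteq> b" using assms(3) simple_graphD[OF assms(1)] by metis+
  have "gdist V E a b \<le> 1"
    using gdist_le_walk[of V E "[a, b]" a b] ab assms(3) by (simp add: walk_def)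
  moreover have "gdist V E a b \<noteq> 0" using gdist_small_cases(1)[OF assms(2) ab(1,2)] ab(3) by blast
  ultimately show ?thesis by simp
qed

section \<open>Transportation distance\<close>

definition plan_cost :: "'a set \<Rightarrow> ('a \<Rightarrow> 'a \<Rightarrow> bool) \<Rightarrow> ('a \<Rightarrow> 'a \<Rightarrow> real) \<Rightarrow> real" where
  "plan_cost V E A = (\<Sum>a\<in>V. \<Sum>b\<in>V. A a b * real (gdist V E a b))"

lemma plan_cost_nonneg: "coupling V m1 m2 A \<Longrightarrow> 0 \<le> plan_cost V E A"
  unfolding plan_cost_def coupling_def by (intro sum_nonneg) auto

lemma transport_le_plan_cost:
  assumes "coupling V m1 m2 A"
  shows "transport V E m1 m2 \<le> plan_cost V E A"
  unfolding transport_def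
proof (rule cInf_lower)
  show "plan_cost V E A \<in> {(\<Sum>a\<in>V. \<Sum>b\<in>V. A a b * real (gdist V E a b)) | A. coupling V m1 m2 A}"
    using assms unfolding plan_cost_def by blast
  show "bdd_below {(\<Sum>a\<in>V. \<Sum>b\<in>V. A a b * real (gdist V E a b)) | A. coupling V m1 m2 A}"
    using plan_cost_nonneg[unfolded plan_cost_def] by (intro bdd_belowI[of _ 0]) blast
qed

lemma transport_geI:
  assumes "coupling V m1 m2 A0" "\<And>A. coupling V m1 m2 A \<Longrightarrow> c \<le> plan_cost V E A"
  shows "c \<le> transport V E m1 m2"
  unfolding transport_def by (rule cInf_greatest) (use assms in \<open>auto simp: plan_cost_def\<close>)

lemma transport_ge_dual:
  assumes "finite V" "coupling V m1 m2 A0"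
    and lip: "\<And>a b. a \<in> V \<Longrightarrow> b \<in> V \<Longrightarrow> m1 a \<noteq> 0 \<Longrightarrow> m2 b \<noteq> 0 \<Longrightarrow> f a - f b \<le> real (gdist V E a b)"
  shows "(\<Sum>a\<in>V. f a * m1 a) - (\<Sum>b\<in>V. f b * m2 b) \<le> transport V E m1 m2"
proof (rule transport_geI[OF assms(2)])
  fix A assume A: "coupling V m1 m2 A"
  then have A0: "\<And>a b. 0 \<le> A a b" and row: "\<And>a. a \<in> V \<Longrightarrow> (\<Sum>b\<in>V. A a b) = m1 a"
    and col: "\<And>b. b \<in> V \<Longrightarrow> (\<Sum>a\<in>V. A a b) = m2 b" unfolding coupling_def by auto
  have "(\<Sum>a\<in>V. f a * m1 a) = (\<Sum>a\<in>V. \<Sum>b\<in>V. f a * A a b)"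
    by (rule sum.cong) (auto simp: row[symmetric] sum_distrib_left)
  moreover have "(\<Sum>b\<in>V. f b * m2 b) = (\<Sum>a\<in>V. \<Sum>b\<in>V. f b * A a b)"
    by (subst sum.swap) (rule sum.cong, auto simp: col[symmetric] sum_distrib_left)
  ultimately have "(\<Sum>a\<in>V. f a * m1 a) - (\<Sum>b\<in>V. f b * m2 b) = (\<Sum>a\<in>V. \<Sum>b\<in>V. (f a - f b) * A a b)"
    by (simp add: sum_subtractf left_diff_distrib)
  also have "\<dots> \<le> plan_cost V E A"
    unfolding plan_cost_def
  proof (intro sum_mono)
    fix a b assume ab: "a \<in> V" "b \<in> V"
    show "(f a - f b) * A a b \<le> A a b * real (gdist V E a b)"
    proof (cases "A a b = 0")
      case False
      have "A a b \<le> m1 a" unfolding row[OF ab(1), symmetric]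
        by (rule member_le_sum) (use A0 ab assms(1) in auto)
      moreover have "A a b \<le> m2 b" unfolding col[OF ab(2), symmetric]
        by (rule member_le_sum) (use A0 ab assms(1) in auto)
      ultimately have "f a - f b \<le> real (gdist V E a b)" using lip[OF ab] A0[of a b] False by auto
      then show ?thesis using A0[of a b] by (simp add: mult.commute mult_left_mono)
    qed simp
  qed
  finally show "(\<Sum>a\<in>V. f a * m1 a) - (\<Sum>b\<in>V. f b * m2 b) \<le> plan_cost V E A" .
qed

lemma transport_mix_point_masses:
  assumes "finite V" "x \<in> V" "y \<in> V" "0 < t" "t \<le> 1" "coupling V m1 m2 A0"
    and m1': "\<And>v. m1' v = t * m1 v + (1 - t) * of_bool (v = x)"
    and m2': "\<And>v. m2' v = t * m2 v + (1 - t) * of_bool (v = y)"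
  shows "transport V E m1' m2' \<le> t * transport V E m1 m2 + (1 - t) * real (gdist V E x y)"
proof -
  let ?D = "real (gdist V E x y)"
  have "(transport V E m1' m2' - (1 - t) * ?D) / t \<le> transport V E m1 m2"
  proof (rule transport_geI[OF assms(6)])
    fix A assume A: "coupling V m1 m2 A"
    define A' where "A' a b = t * A a b + (1 - t) * of_bool (a = x \<and> b = y)" for a b
    have coupling': "coupling V m1' m2' A'"
      unfolding coupling_def
    proof (intro conjI allI impI ballI)
      fix a b
      have "0 \<le> A a b" "A a b \<le> 1" using A unfolding coupling_def by auto
      then show "0 \<le> A' a b" "A' a b \<le> 1"
        unfolding A'_def using assms(4,5) by (auto intro: convex_bound_le mult_le_one)
      show "A' a b = 0" if "a \<notin> V \<or> b \<notin> V"
        using that A assms(2,3) unfolding A'_def coupling_def by auto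
    next
      fix a assume "a \<in> V"
      then show "(\<Sum>b\<in>V. A' a b) = m1' a"
        using A assms(1,3) unfolding A'_def coupling_def m1'
        by (simp add: sum.distrib flip: sum_distrib_left)
    next
      fix b assume "b \<in> V"
      then show "(\<Sum>a\<in>V. A' a b) = m2' b"
        using A assms(1,2) unfolding A'_def coupling_def m2'
        by (simp add: sum.distrib flip: sum_distrib_left)
    qed
    have "(\<Sum>a\<in>V. \<Sum>b\<in>V. of_bool (a = x \<and> b = y) * real (gdist V E a b))
        = (\<Sum>a\<in>V. of_bool (a = x) * real (gdist V E a y))"
      by (rule sum.cong) (use assms(1,3) in \<open>auto simp: Int_absorb1 sum.delta\<close>)
    also have "\<dots> = ?D" using assms(1,2) by simp
    finally have point_mass_cost:
      "(\<Sum>a\<in>V. \<Sum>b\<in>V. of_bool (a = x \<and> b = y) * real (gdist V E a b)) = ?D" .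
    have "plan_cost V E A' = t * plan_cost V E A + (1 - t) * ?D"
      unfolding plan_cost_def A'_def
      by (simp add: distrib_right sum.distrib mult.assoc point_mass_cost flip: sum_distrib_left)
    with transport_le_plan_cost[OF coupling', of E]
    show "(transport V E m1' m2' - (1 - t) * ?D) / t \<le> plan_cost V E A"
      using assms(4) by (simp add: divide_le_eq mult.commute)
  qed
  then show ?thesis using assms(4) by (simp add: divide_le_eq mult.commute)
qed

lemma transport_le_bij:
  assumes "finite V" "S \<subseteq> V" "bij_betw \<tau> S T" "T \<subseteq> V" "0 \<le> c" "c \<le> 1"
  shows "transport V E (\<lambda>v. if v \<in> S then c else 0) (\<lambda>v. if v \<in> T then c else 0)
    \<le> c * (\<Sum>a\<in>S. real (gdist V E a (\<tau> a)))"
proof -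
  define A where "A a b = (if a \<in> S \<and> b = \<tau> a then c else 0)" for a b
  have \<tau>: "\<And>a. a \<in> S \<Longrightarrow> \<tau> a \<in> T" "inj_on \<tau> S" "\<tau> ` S = T"
    using assms(3) by (auto simp: bij_betw_def)
  have col: "(\<Sum>a\<in>V. A a b) = (if b \<in> T then c else 0)" for b
  proof -
    have "(\<Sum>a\<in>V. A a b) = (\<Sum>a\<in>S. if \<tau> a = b then c else 0)"
      by (rule sum.mono_neutral_cong_right) (use assms(1,2) in \<open>auto simp: A_def\<close>)
    also have "\<dots> = (\<Sum>w\<in>T. if w = b then c else 0)"
      using sum.reindex[OF \<tau>(2), of "\<lambda>w. if w = b then c else 0"] \<tau>(3) by simp
    also have "\<dots> = (if b \<in> T then c else 0)"
      using finite_subset[OF assms(4,1)] by (simp add: sum.delta)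
    finally show ?thesis .
  qed
  have "coupling V (\<lambda>v. if v \<in> S then c else 0) (\<lambda>v. if v \<in> T then c else 0) A"
    unfolding coupling_def
  proof (intro conjI allI impI ballI)
    show "0 \<le> A a b" "A a b \<le> 1" for a b unfolding A_def using assms(5,6) by auto
    show "A a b = 0" if "a \<notin> V \<or> b \<notin> V" for a b
      using that assms(2,4) \<tau>(1) unfolding A_def by auto
    show "(\<Sum>b\<in>V. A a b) = (if a \<in> S then c else 0)" if "a \<in> V" for a
      unfolding A_def using assms(1,4) \<tau>(1) by (auto simp: sum.delta' subset_iff)
  qed (use col in simp)
  then have "transport V E (\<lambda>v. if v \<in> S then c else 0) (\<lambda>v. if v \<in> T then c else 0) \<le> plan_cost V E A"
    by (rule transport_le_plan_cost)
  also have "plan_cost V E A = (\<Sum>a\<in>V. if a \<in> S then c * real (gdist V E a (\<tau> a)) else 0)"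
    unfolding plan_cost_def A_def
    by (rule sum.cong) (use assms(1,4) \<tau>(1) in \<open>auto simp: if_distrib if_distribR sum.delta subset_iff cong: if_cong\<close>)
  also have "\<dots> = c * (\<Sum>a\<in>S. real (gdist V E a (\<tau> a)))"
    using assms(1,2) by (simp add: sum.If_cases Int_absorb1 sum_distrib_left)
  finally show ?thesis .
qed

section \<open>Lazy random walks and curvature\<close>

lemma lazy_walk_mix:
  assumes "\<alpha> < 1"
  shows "lazy_walk V E \<beta> z v = (1 - \<beta>) / (1 - \<alpha>) * lazy_walk V E \<alpha> z v
    + (1 - (1 - \<beta>) / (1 - \<alpha>)) * of_bool (v = z)"
proof -
  define t where "t = (1 - \<beta>) / (1 - \<alpha>)"
  have "t * (1 - \<alpha>) = 1 - \<beta>" using assms unfolding t_def by simp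
  then have "t * \<alpha> + (1 - t) = \<beta>" by (simp add: algebra_simps)
  with \<open>t * (1 - \<alpha>) = 1 - \<beta>\<close> show ?thesis
    unfolding t_def[symmetric] lazy_walk_def by (auto simp: mult.assoc)
qed

lemma lazy_walk_support: "lazy_walk V E \<alpha> z a \<noteq> 0 \<Longrightarrow> a \<in> insert z (nbrs V E z)"
  unfolding lazy_walk_def by (auto split: if_splits)

lemma sum_lazy_walk:
  assumes "simple_graph V E" "x \<in> V"
  shows "(\<Sum>a\<in>V. f a * lazy_walk V E \<alpha> x a)
    = \<alpha> * f x + (1 - \<alpha>) / real (deg V E x) * (\<Sum>a\<in>nbrs V E x. f a)"
proof -
  have "x \<notin> nbrs V E x" "nbrs V E x \<subseteq> V" "finite V"
    using simple_graphD[OF assms(1)] unfolding nbrs_def by auto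
  then have "(\<Sum>a\<in>V. f a * lazy_walk V E \<alpha> x a)
      = (\<Sum>a\<in>V. (if a = x then \<alpha> * f x else 0) + (if a \<in> nbrs V E x then (1 - \<alpha>) / real (deg V E x) * f a else 0))"
    by (intro sum.cong) (auto simp: lazy_walk_def)
  also have "\<dots> = \<alpha> * f x + (1 - \<alpha>) / real (deg V E x) * (\<Sum>a\<in>nbrs V E x. f a)"
    using assms(2) \<open>nbrs V E x \<subseteq> V\<close> \<open>finite V\<close>
    by (simp add: sum.distrib sum.If_cases Int_absorb1 sum_distrib_left)
  finally show ?thesis .
qed

lemma lazy_walk_uniform:
  assumes "deg V E x = d" "0 < d"
  shows "lazy_walk V E (1 / (real d + 1)) x v
    = (if v \<in> insert x (nbrs V E x) then 1 / (real d + 1) else 0)"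
proof -
  have "real d \<noteq> 0" "real d + 1 \<noteq> 0" using assms(2) by linarith+
  moreover have "1 - 1 / (real d + 1) = real d / (real d + 1)"
    using \<open>real d + 1 \<noteq> 0\<close> by (simp add: field_simps)
  ultimately have "(1 - 1 / (real d + 1)) / real d = 1 / (real d + 1)" by simp
  then show ?thesis unfolding lazy_walk_def assms(1) by simp
qed

lemma coupling_product:
  assumes "finite V"
    and "\<And>v. 0 \<le> m1 v" "\<And>v. m1 v \<le> 1" "(\<Sum>v\<in>V. m1 v) = 1"
    and "\<And>v. 0 \<le> m2 v" "\<And>v. m2 v \<le> 1" "(\<Sum>v\<in>V. m2 v) = 1"
  shows "coupling V m1 m2 (\<lambda>a b. if a \<in> V \<and> b \<in> V then m1 a * m2 b else 0)"
  unfolding coupling_def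
  using assms by (auto simp: mult_le_one simp flip: sum_distrib_left sum_distrib_right)

lemma lazy_walk_probability:
  assumes "simple_graph V E" "x \<in> V" "0 < deg V E x" "0 \<le> \<alpha>" "\<alpha> \<le> 1"
  shows "0 \<le> lazy_walk V E \<alpha> x v" "lazy_walk V E \<alpha> x v \<le> 1" "(\<Sum>v\<in>V. lazy_walk V E \<alpha> x v) = 1"
proof -
  show "0 \<le> lazy_walk V E \<alpha> x v" using assms(4,5) by (simp add: lazy_walk_def)
  show "lazy_walk V E \<alpha> x v \<le> 1" using assms(3-5) by (simp add: lazy_walk_def divide_le_eq)
  show "(\<Sum>v\<in>V. lazy_walk V E \<alpha> x v) = 1"
    using sum_lazy_walk[OF assms(1,2), of "\<lambda>_. 1" \<alpha>] assms(3) by (simp add: deg_def)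
qed

lemma lazy_walk_coupling_exists:
  assumes "simple_graph V E" "x \<in> V" "y \<in> V" "0 < deg V E x" "0 < deg V E y" "0 \<le> \<alpha>" "\<alpha> \<le> 1"
  shows "\<exists>A. coupling V (lazy_walk V E \<alpha> x) (lazy_walk V E \<alpha> y) A"
  using coupling_product[OF simple_graphD(1)[OF assms(1)]
      lazy_walk_probability[OF assms(1,2,4,6,7)] lazy_walk_probability[OF assms(1,3,5,6,7)]]
  by blast

lemma transport_lazy_walk_mix:
  assumes "simple_graph V E" "x \<in> V" "y \<in> V" "0 < deg V E x" "0 < deg V E y"
    and "0 \<le> \<alpha>" "\<alpha> \<le> \<beta>" "\<beta> < 1"
  shows "transport V E (lazy_walk V E \<beta> x) (lazy_walk V E \<beta> y)
    \<le> (1 - \<beta>) / (1 - \<alpha>) * transport V E (lazy_walk V E \<alpha> x) (lazy_walk V E \<alpha> y)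
      + (1 - (1 - \<beta>) / (1 - \<alpha>)) * real (gdist V E x y)"
proof -
  obtain A0 where "coupling V (lazy_walk V E \<alpha> x) (lazy_walk V E \<alpha> y) A0"
    using lazy_walk_coupling_exists[OF assms(1-6)] assms(7,8) by fastforce
  moreover have "0 < (1 - \<beta>) / (1 - \<alpha>)" "(1 - \<beta>) / (1 - \<alpha>) \<le> 1"
    using assms(6-8) by (simp_all add: divide_le_eq)
  ultimately show ?thesis
    using assms(7,8) by (intro transport_mix_point_masses simple_graphD(1)[OF assms(1)] assms(2,3)
        lazy_walk_mix) auto
qed

lemma kappa_alpha_div_mono:
  assumes "simple_graph V E" "x \<in> V" "y \<in> V" "0 < deg V E x" "0 < deg V E y"
    and "0 \<le> \<alpha>" "\<alpha> \<le> \<beta>" "\<beta> < 1"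
  shows "kappa_alpha V E \<alpha> x y / (1 - \<alpha>) \<le> kappa_alpha V E \<beta> x y / (1 - \<beta>)"
proof -
  define t where "t = (1 - \<beta>) / (1 - \<alpha>)"
  define D where "D = real (gdist V E x y)"
  have t: "0 < t" "t \<le> 1" "t / (1 - \<beta>) = 1 / (1 - \<alpha>)"
    using assms(6-8) unfolding t_def by (simp_all add: divide_le_eq)
  have mix: "transport V E (lazy_walk V E \<beta> x) (lazy_walk V E \<beta> y)
      \<le> t * transport V E (lazy_walk V E \<alpha> x) (lazy_walk V E \<alpha> y) + (1 - t) * D"
    unfolding t_def D_def by (rule transport_lazy_walk_mix[OF assms])
  have "t * kappa_alpha V E \<alpha> x y \<le> kappa_alpha V E \<beta> x y"
  proof (cases "D = 0")
    case True
    then show ?thesis using t(2) unfolding kappa_alpha_def D_def by simp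
  next
    case False
    then have "0 < D" unfolding D_def by simp
    let ?Wa = "transport V E (lazy_walk V E \<alpha> x) (lazy_walk V E \<alpha> y)"
    let ?Wb = "transport V E (lazy_walk V E \<beta> x) (lazy_walk V E \<beta> y)"
    have "?Wb / D \<le> (t * ?Wa + (1 - t) * D) / D"
      using mix \<open>0 < D\<close> by (simp add: divide_right_mono)
    also have "\<dots> = t * (?Wa / D) + (1 - t)" using \<open>0 < D\<close> by (simp add: field_simps)
    finally show ?thesis unfolding kappa_alpha_def D_def[symmetric] by (simp add: algebra_simps)
  qed
  then have "t * kappa_alpha V E \<alpha> x y / (1 - \<beta>) \<le> kappa_alpha V E \<beta> x y / (1 - \<beta>)"
    using assms(8) by (simp add: divide_right_mono)
  with t(3) show ?thesis by (metis times_divide_eq_left mult.commute times_divide_eq_right mult_1)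
qed

lemma Lim_at_left_1_le:
  fixes g :: "real \<Rightarrow> real"
  assumes mono: "\<And>a b. 0 \<le> a \<Longrightarrow> a \<le> b \<Longrightarrow> b < 1 \<Longrightarrow> g a \<le> g b"
    and bound: "\<And>a. 0 \<le> a \<Longrightarrow> a < 1 \<Longrightarrow> g a \<le> B"
  shows "Lim (at_left 1) g \<le> B"
proof -
  have "at (1::real) within ({..<1} \<inter> {0..}) = at 1 within {0..1}"
    by (rule at_within_nhd[of _ UNIV]) auto
  also have "\<dots> = at_left 1" by (rule at_within_Icc_at_left) simp
  finally have "(g \<longlongrightarrow> Sup (g ` ({..<1} \<inter> {0..}))) (at_left 1)"
    using Lim_left_bound[of "{0..}" 1 g B] mono bound by auto
  then have "Lim (at_left 1) g = Sup (g ` ({..<1} \<inter> {0..}))"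
    by (rule tendsto_Lim[rotated]) simp
  also have "\<dots> \<le> B"
  proof (rule cSup_least)
    have "0 \<in> {..<1::real} \<inter> {0..}" by simp
    then show "g ` ({..<1} \<inter> {0..}) \<noteq> {}" by blast
  qed (use bound in auto)
  finally show ?thesis .
qed

text \<open>\<^const>\<open>Lim\<close> is an arbitrary value unless the limit exists; here existence comes from
  the monotonicity of \<open>\<kappa>\<^sub>\<alpha>/(1 - \<alpha>)\<close> in \<open>\<alpha>\<close>.\<close>
lemma kappa_LLY_nonpos:
  assumes "simple_graph V E" "x \<in> V" "y \<in> V" "0 < deg V E x" "0 < deg V E y"
    and "\<And>\<alpha>. 0 \<le> \<alpha> \<Longrightarrow> \<alpha> < 1 \<Longrightarrow> kappa_alpha V E \<alpha> x y \<le> 0"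
  shows "kappa_LLY V E x y \<le> 0"
  unfolding kappa_LLY_def
proof (rule Lim_at_left_1_le)
  show "kappa_alpha V E a x y / (1 - a) \<le> kappa_alpha V E b x y / (1 - b)"
    if "0 \<le> a" "a \<le> b" "b < 1" for a b
    by (rule kappa_alpha_div_mono[OF assms(1-5) that])
  show "kappa_alpha V E a x y / (1 - a) \<le> 0" if "0 \<le> a" "a < 1" for a
    using assms(6)[OF that] that(2) by (simp add: divide_nonpos_pos)
qed

lemma kappa_LLY_eqI:
  assumes "eventually (\<lambda>\<alpha>. kappa_alpha V E \<alpha> x y / (1 - \<alpha>) = c) (at_left 1)"
  shows "kappa_LLY V E x y = c"
  unfolding kappa_LLY_def by (rule tendsto_Lim) (simp_all add: tendsto_eventually[OF assms])

section \<open>Hall's marriage theorem\<close>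

definition hall_condition :: "'a set \<Rightarrow> ('a \<Rightarrow> 'b set) \<Rightarrow> bool" where
  "hall_condition U N \<longleftrightarrow> (\<forall>S\<subseteq>U. card S \<le> card (\<Union>(N ` S)))"

lemma hall_condition_delete:
  assumes surplus: "\<And>S. S \<subseteq> U \<Longrightarrow> S \<noteq> {} \<Longrightarrow> S \<noteq> U \<Longrightarrow> card S < card (\<Union>(N ` S))"
    and "u0 \<in> U"
  shows "hall_condition (U - {u0}) (\<lambda>u. N u - {v0})"
  unfolding hall_condition_def
proof (intro allI impI)
  fix S assume S: "S \<subseteq> U - {u0}"
  show "card S \<le> card (\<Union>u\<in>S. N u - {v0})"
  proof (cases "S = {}")
    case False
    then have "card S < card (\<Union>(N ` S))" using S assms(2) by (intro surplus) auto
    moreover have "(\<Union>u\<in>S. N u - {v0}) = \<Union>(N ` S) - {v0}" by auto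
    ultimately show ?thesis by (auto simp: card_Diff_singleton_if)
  qed simp
qed

lemma hall_condition_contract:
  assumes "finite U" "\<And>u. u \<in> U \<Longrightarrow> finite (N u)" "hall_condition U N"
    and "S0 \<subseteq> U" "card (\<Union>(N ` S0)) \<le> card S0"
  shows "hall_condition (U - S0) (\<lambda>u. N u - \<Union>(N ` S0))"
  unfolding hall_condition_def
proof (intro allI impI)
  fix S assume S: "S \<subseteq> U - S0"
  have "S \<union> S0 \<subseteq> U" using S assms(4) by auto
  moreover have "finite (S \<union> S0)" using \<open>S \<union> S0 \<subseteq> U\<close> assms(1) by (rule finite_subset)
  ultimately have fin: "finite S" "finite S0" "finite (\<Union>(N ` (S \<union> S0)))"
    using assms(2) by auto
  have "card (S \<union> S0) \<le> card (\<Union>(N ` (S \<union> S0)))"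
    using assms(3) \<open>S \<union> S0 \<subseteq> U\<close> unfolding hall_condition_def by blast
  moreover have "card (S \<union> S0) = card S + card S0" using S fin by (intro card_Un_disjoint) auto
  moreover have "card (\<Union>(N ` (S \<union> S0)) - \<Union>(N ` S0)) = card (\<Union>(N ` (S \<union> S0))) - card (\<Union>(N ` S0))"
    using fin(3) by (intro card_Diff_subset) (auto intro: rev_finite_subset)
  moreover have "card (\<Union>(N ` S0)) \<le> card (\<Union>(N ` (S \<union> S0)))"
    using fin(3) by (intro card_mono) auto
  moreover have "(\<Union>u\<in>S. N u - \<Union>(N ` S0)) = \<Union>(N ` (S \<union> S0)) - \<Union>(N ` S0)" by auto
  ultimately show "card S \<le> card (\<Union>u\<in>S. N u - \<Union>(N ` S0))" using assms(5) by auto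
qed

definition distinct_representatives :: "'a set \<Rightarrow> ('a \<Rightarrow> 'b set) \<Rightarrow> ('a \<Rightarrow> 'b) \<Rightarrow> bool" where
  "distinct_representatives U N f \<longleftrightarrow> inj_on f U \<and> (\<forall>u\<in>U. f u \<in> N u)"

lemma distinct_representatives_insert:
  assumes "distinct_representatives (U - {u0}) (\<lambda>u. N u - {v0}) f" "u0 \<in> U" "v0 \<in> N u0"
  shows "distinct_representatives U N (f(u0 := v0))"
proof -
  have f: "inj_on f (U - {u0})" "\<forall>u\<in>U - {u0}. f u \<in> N u - {v0}"
    using assms(1) unfolding distinct_representatives_def by auto
  have "inj_on (f(u0 := v0)) (U - {u0})" using f(1) by (auto simp: inj_on_def)
  moreover have "v0 \<notin> (f(u0 := v0)) ` (U - {u0})" using f(2) by auto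
  ultimately have "inj_on (f(u0 := v0)) U"
    using assms(2) inj_on_insert[of "f(u0 := v0)" u0 "U - {u0}"] by (simp add: insert_absorb)
  then show ?thesis using f(2) assms(3) unfolding distinct_representatives_def by auto
qed

lemma distinct_representatives_Un:
  assumes "distinct_representatives S0 N f1"
    and "distinct_representatives (U - S0) (\<lambda>u. N u - \<Union>(N ` S0)) f2" "S0 \<subseteq> U"
  shows "distinct_representatives U N (\<lambda>u. if u \<in> S0 then f1 u else f2 u)"
proof -
  let ?f = "\<lambda>u. if u \<in> S0 then f1 u else f2 u"
  have f1: "inj_on f1 S0" "\<forall>u\<in>S0. f1 u \<in> N u"
    and f2: "inj_on f2 (U - S0)" "\<forall>u\<in>U - S0. f2 u \<in> N u - \<Union>(N ` S0)"
    using assms(1,2) unfolding distinct_representatives_def by auto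
  have "inj_on ?f S0" using f1(1) by (auto simp: inj_on_def)
  moreover have "inj_on ?f (U - S0)" using f2(1) by (auto simp: inj_on_def)
  moreover have "?f ` S0 \<inter> ?f ` (U - S0) = {}" using f1(2) f2(2) by fastforce
  ultimately have "inj_on ?f (S0 \<union> (U - S0))" by (simp only: inj_on_Un) auto
  then have "inj_on ?f U" using assms(3) by (simp add: Un_absorb1)
  then show ?thesis using f1(2) f2(2) unfolding distinct_representatives_def by auto
qed

lemma Hall_marriage:
  fixes N :: "'a \<Rightarrow> 'b set"
  assumes "finite U" "\<And>u. u \<in> U \<Longrightarrow> finite (N u)" "hall_condition U N"
  shows "\<exists>f. distinct_representatives U N f"
  using assms
proof (induction "card U" arbitrary: U N rule: less_induct)
  case less
  show ?case
  proof (cases "\<forall>S. S \<subseteq> U \<longrightarrow> S \<noteq> {} \<longrightarrow> S \<noteq> U \<longrightarrow> card S < card (\<Union>(N ` S))")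
    case True
    show ?thesis
    proof (cases "U = {}")
      case True
      then have "distinct_representatives U N undefined" unfolding distinct_representatives_def by simp
      then show ?thesis by blast
    next
      case False
      then obtain u0 where u0: "u0 \<in> U" by blast
      have "card {u0} \<le> card (\<Union>(N ` {u0}))"
        using less.prems(3) u0 unfolding hall_condition_def by blast
      then obtain v0 where v0: "v0 \<in> N u0" by fastforce
      have "card (U - {u0}) < card U" using less.prems(1) u0 by (intro psubset_card_mono) auto
      then have "\<exists>f. distinct_representatives (U - {u0}) (\<lambda>u. N u - {v0}) f"
      proof (rule less.hyps)
        show "finite (U - {u0})" "\<And>u. u \<in> U - {u0} \<Longrightarrow> finite (N u - {v0})"
          using less.prems(1,2) by auto
        show "hall_condition (U - {u0}) (\<lambda>u. N u - {v0})"
          by (rule hall_condition_delete) (use True u0 in auto)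
      qed
      then obtain f where "distinct_representatives (U - {u0}) (\<lambda>u. N u - {v0}) f" by blast
      then have "distinct_representatives U N (f(u0 := v0))"
        by (rule distinct_representatives_insert[where N = N, OF _ u0 v0])
      then show ?thesis by blast
    qed
  next
    case False
    then obtain S0 where S0: "S0 \<subseteq> U" "S0 \<noteq> {}" "S0 \<noteq> U" "card (\<Union>(N ` S0)) \<le> card S0"
      by (auto simp: not_less)
    have "card S0 < card U" using S0 less.prems(1) by (simp add: psubset_card_mono psubsetI)
    then have "\<exists>f1. distinct_representatives S0 N f1"
    proof (rule less.hyps)
      show "finite S0" using S0(1) less.prems(1) by (rule finite_subset)
      show "\<And>u. u \<in> S0 \<Longrightarrow> finite (N u)" using S0(1) less.prems(2) by auto
      show "hall_condition S0 N" using S0(1) less.prems(3) unfolding hall_condition_def by auto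
    qed
    then obtain f1 where f1: "distinct_representatives S0 N f1" by blast
    have "card (U - S0) < card U" using S0 less.prems(1) by (intro psubset_card_mono) auto
    then have "\<exists>f2. distinct_representatives (U - S0) (\<lambda>u. N u - \<Union>(N ` S0)) f2"
    proof (rule less.hyps)
      show "finite (U - S0)" "\<And>u. u \<in> U - S0 \<Longrightarrow> finite (N u - \<Union>(N ` S0))"
        using less.prems(1,2) by auto
      show "hall_condition (U - S0) (\<lambda>u. N u - \<Union>(N ` S0))"
        by (rule hall_condition_contract[OF less.prems S0(1,4)])
    qed
    then obtain f2 where "distinct_representatives (U - S0) (\<lambda>u. N u - \<Union>(N ` S0)) f2" by blast
    then have "distinct_representatives U N (\<lambda>u. if u \<in> S0 then f1 u else f2 u)"
      by (rule distinct_representatives_Un[OF f1 _ S0(1)])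
    then show ?thesis by blast
  qed
qed

section \<open>Curvature of an edge in a regular graph without 3- and 5-cycles\<close>

locale C3_C5_free_regular_edge =
  fixes V :: "'a set" and E :: "'a \<Rightarrow> 'a \<Rightarrow> bool" and d :: nat and x y :: 'a
  assumes simple: "simple_graph V E" and connected: "connected_graph V E"
    and regular: "regular V E d" and no_C3: "\<not> has_cycle V E 3" and no_C5: "\<not> has_cycle V E 5"
    and edge: "E x y"
begin

abbreviation Nx :: "'a set" where "Nx \<equiv> nbrs V E x - {y}"
abbreviation Ny :: "'a set" where "Ny \<equiv> nbrs V E y - {x}"

lemma x_in_V: "x \<in> V" and y_in_V: "y \<in> V" and x_ne_y: "x \<noteq> y" and edge_yx: "E y x"
  using edge simple_graphD[OF simple] by metis+

lemma finite_V: "finite V"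
  using simple_graphD(1)[OF simple] .

lemma deg_x: "deg V E x = d" and deg_y: "deg V E y = d"
  using regular x_in_V y_in_V unfolding regular_def by auto

lemma y_in_nbrs_x: "y \<in> nbrs V E x" and x_in_nbrs_y: "x \<in> nbrs V E y"
  using edge edge_yx x_in_V y_in_V unfolding nbrs_def by auto

lemma finite_nbrs: "finite (nbrs V E z)"
  using finite_V unfolding nbrs_def by auto

lemma finite_Nx: "finite Nx" and finite_Ny: "finite Ny"
  using finite_nbrs by auto

lemma card_Nx: "card Nx = d - 1" and card_Ny: "card Ny = d - 1"
  using deg_x deg_y y_in_nbrs_x x_in_nbrs_y finite_nbrs unfolding deg_def by auto

lemma d_pos: "0 < d"
  using deg_x y_in_nbrs_x finite_nbrs unfolding deg_def by (metis card_gt_0_iff empty_iff)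

lemma Nx_memD: "u \<in> Nx \<Longrightarrow> u \<in> V \<and> E x u \<and> u \<noteq> x \<and> u \<noteq> y \<and> \<not> E u y"
  using triangle_free[OF simple no_C3, of x u y] edge_yx simple_graphD(5)[OF simple, of x]
  unfolding nbrs_def by auto

lemma Ny_memD: "w \<in> Ny \<Longrightarrow> w \<in> V \<and> E y w \<and> w \<noteq> x \<and> w \<noteq> y \<and> \<not> E x w"
  using triangle_free[OF simple no_C3, of y w x] edge simple_graphD(4,5)[OF simple]
  unfolding nbrs_def by blast

lemma Nx_Ny_disjoint: "Nx \<inter> Ny = {}"
  using Nx_memD Ny_memD simple_graphD(4)[OF simple] by blast

lemma gdist_xy: "gdist V E x y = 1"
  using gdist_edge[OF simple connected edge] .

lemma gdist_ge_1: "a \<in> V \<Longrightarrow> b \<in> V \<Longrightarrow> a \<noteq> b \<Longrightarrow> 1 \<le> gdist V E a b"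
  using gdist_small_cases(1)[OF connected] by (metis less_one not_le)

lemma gdist_Nx_y: "u \<in> Nx \<Longrightarrow> 2 \<le> gdist V E u y"
  using gdist_small_cases(1,2)[OF connected, of u y] Nx_memD y_in_V
  by (metis One_nat_def less_2_cases not_le)

lemma gdist_x_Ny: "w \<in> Ny \<Longrightarrow> 2 \<le> gdist V E x w"
  using gdist_small_cases(1,2)[OF connected, of x w] Ny_memD x_in_V
  by (metis One_nat_def less_2_cases not_le)

text \<open>A common neighbour of non-adjacent u and w would close the pentagon x u v w y.\<close>
lemma gdist_Nx_Ny:
  assumes "u \<in> Nx" "w \<in> Ny" "\<not> E u w"
  shows "3 \<le> gdist V E u w"
proof -
  have u: "u \<in> V" "E x u" "u \<noteq> x" "u \<noteq> y" "\<not> E u y" and w: "w \<in> V" "E y w" "w \<noteq> x" "w \<noteq> y" "\<not> E x w"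
    using Nx_memD[OF assms(1)] Ny_memD[OF assms(2)] by auto
  have "u \<noteq> w" using assms(1,2) Nx_Ny_disjoint by auto
  moreover have "\<not> (E u v \<and> E v w)" for v
  proof
    assume "E u v \<and> E v w"
    then have "E u v" "E v w" by auto
    then have "distinct [x, u, v, w, y]"
      using u w x_ne_y simple_graphD(4,5)[OF simple] by auto
    then show False
      using pentagon_free[OF simple no_C5, of x u v w y] u w \<open>E u v\<close> \<open>E v w\<close> edge_yx
        simple_graphD(4)[OF simple] by blast
  qed
  ultimately show ?thesis
    using gdist_small_cases[OF connected u(1) w(1)] assms(3)
    by (metis less_2_cases less_Suc_eq not_le numeral_3_eq_3 numeral_2_eq_2 One_nat_def)
qed

abbreviation W :: "real \<Rightarrow> real" where
  "W \<alpha> \<equiv> transport V E (lazy_walk V E \<alpha> x) (lazy_walk V E \<alpha> y)"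

lemma test_function_lipschitz:
  assumes fx: "f x = 1" and fy: "f y = 0"
    and fNx: "\<And>u. u \<in> Nx \<Longrightarrow> 0 \<le> f u \<and> f u \<le> 2"
    and fNy: "\<And>w. w \<in> Ny \<Longrightarrow> -1 \<le> f w \<and> f w \<le> 1"
    and fE: "\<And>u w. u \<in> Nx \<Longrightarrow> w \<in> Ny \<Longrightarrow> E u w \<Longrightarrow> f u - f w \<le> 1"
    and a: "a \<in> insert x (nbrs V E x)" and b: "b \<in> insert y (nbrs V E y)"
  shows "f a - f b \<le> real (gdist V E a b)"
proof -
  from a consider "a = x" | "a = y" | "a \<in> Nx" by blast
  then show ?thesis
  proof cases
    case 1
    from b consider "b = x" | "b = y" | "b \<in> Ny" by blast
    then show ?thesis
      by cases (use 1 fx fy fNy gdist_xy gdist_x_Ny in \<open>force+\<close>)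
  next
    case 2
    from b consider "b = x" | "b = y" | "b \<in> Ny" by blast
    then show ?thesis
    proof cases
      case 3
      then have "1 \<le> gdist V E y b" using gdist_ge_1 y_in_V Ny_memD by metis
      then show ?thesis using 2 3 fy fNy by force
    qed (use 2 fx fy in auto)
  next
    case 3
    then have u: "a \<in> V" "a \<noteq> x" using Nx_memD by auto
    from b consider "b = x" | "b = y" | "b \<in> Ny" by blast
    then show ?thesis
    proof cases
      case 1
      then show ?thesis using gdist_ge_1[OF u(1) x_in_V u(2)] 3 fx fNx by force
    next
      case 2
      then show ?thesis using gdist_Nx_y[OF 3] fy fNx[OF 3] by force
    next
      case b: 3
      show ?thesis
      proof (cases "E a b")
        case True
        then show ?thesis using fE[OF 3 b] gdist_edge[OF simple connected True] by simp
      next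
        case False
        then show ?thesis using gdist_Nx_Ny[OF 3 b False] fNx[OF 3] fNy[OF b] by force
      qed
    qed
  qed
qed

lemma transport_ge_test_function:
  assumes "0 \<le> \<alpha>" "\<alpha> \<le> 1" and fx: "f x = 1" and fy: "f y = 0"
    and "\<And>u. u \<in> Nx \<Longrightarrow> 0 \<le> f u \<and> f u \<le> 2"
    and "\<And>w. w \<in> Ny \<Longrightarrow> -1 \<le> f w \<and> f w \<le> 1"
    and "\<And>u w. u \<in> Nx \<Longrightarrow> w \<in> Ny \<Longrightarrow> E u w \<Longrightarrow> f u - f w \<le> 1"
  shows "1 - (1 - \<alpha>) * (real d + 1 - ((\<Sum>u\<in>Nx. f u) - (\<Sum>w\<in>Ny. f w))) / real d \<le> W \<alpha>"
proof -
  obtain A0 where A0: "coupling V (lazy_walk V E \<alpha> x) (lazy_walk V E \<alpha> y) A0"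
    using lazy_walk_coupling_exists[OF simple x_in_V y_in_V _ _ assms(1,2)] deg_x deg_y d_pos by auto
  have "(\<Sum>a\<in>nbrs V E x. f a) = (\<Sum>u\<in>Nx. f u)" "(\<Sum>b\<in>nbrs V E y. f b) = 1 + (\<Sum>w\<in>Ny. f w)"
    using sum.remove[OF finite_nbrs y_in_nbrs_x, of f] sum.remove[OF finite_nbrs x_in_nbrs_y, of f] fx fy
    by simp_all
  then have "1 - (1 - \<alpha>) * (real d + 1 - ((\<Sum>u\<in>Nx. f u) - (\<Sum>w\<in>Ny. f w))) / real d
      = (\<Sum>a\<in>V. f a * lazy_walk V E \<alpha> x a) - (\<Sum>b\<in>V. f b * lazy_walk V E \<alpha> y b)"
    using d_pos by (simp add: sum_lazy_walk[OF simple] x_in_V y_in_V deg_x deg_y fx fy field_simps)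
  also have "\<dots> \<le> W \<alpha>"
  proof (rule transport_ge_dual[OF finite_V A0])
    fix a b assume "lazy_walk V E \<alpha> x a \<noteq> 0" "lazy_walk V E \<alpha> y b \<noteq> 0"
    then show "f a - f b \<le> real (gdist V E a b)"
      by (intro test_function_lipschitz[OF assms(3-7)] lazy_walk_support)
  qed
  finally show ?thesis .
qed

lemma transport_lower_bound:
  assumes "0 \<le> \<alpha>" "\<alpha> \<le> 1"
  shows "1 - 2 * (1 - \<alpha>) / real d \<le> W \<alpha>"
proof -
  define f where "f z = (if z = x then 1 else if z \<in> Nx then 2 else if z \<in> Ny then 1 else 0 :: real)" for z
  have fx: "f x = 1" and fy: "f y = 0" using x_ne_y nbrs_irrefl[OF simple] unfolding f_def by auto
  have fNx: "f u = 2" if "u \<in> Nx" for u using that Nx_memD[OF that] unfolding f_def by simp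
  have fNy: "f w = 1" if "w \<in> Ny" for w using that Ny_memD[OF that] Nx_Ny_disjoint unfolding f_def by auto
  have "1 - (1 - \<alpha>) * (real d + 1 - ((\<Sum>u\<in>Nx. f u) - (\<Sum>w\<in>Ny. f w))) / real d \<le> W \<alpha>"
    by (rule transport_ge_test_function[OF assms fx fy]) (simp_all add: fNx fNy)
  moreover have "(\<Sum>u\<in>Nx. f u) = 2 * (real d - 1)" "(\<Sum>w\<in>Ny. f w) = real d - 1"
    using fNx fNy card_Nx card_Ny d_pos by (simp_all add: of_nat_diff)
  ultimately show ?thesis by (simp add: algebra_simps)
qed

lemma transport_ge_1_of_Hall_violation:
  assumes "0 \<le> \<alpha>" "\<alpha> \<le> 1" "S \<subseteq> Nx" and violation: "card {w \<in> Ny. \<exists>u\<in>S. E u w} < card S"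
  shows "1 \<le> W \<alpha>"
proof -
  define T where "T = {w \<in> Ny. \<exists>u\<in>S. E u w}"
  define f where "f z = (if z = x then 1 else if z \<in> S then 2 else if z \<in> T then 1
    else if z \<in> Ny then -1 else 0 :: real)" for z
  have T: "T \<subseteq> Ny" "finite T" unfolding T_def using finite_Ny by auto
  have fx: "f x = 1" and fy: "f y = 0"
    using x_ne_y nbrs_irrefl[OF simple] assms(3) T(1) unfolding f_def by auto
  have fNx: "f u = (if u \<in> S then 2 else 0)" if "u \<in> Nx" for u
    using that Nx_memD[OF that] Nx_Ny_disjoint T(1) unfolding f_def by auto
  have fNy: "f w = (if w \<in> T then 1 else -1)" if "w \<in> Ny" for w
    using that Ny_memD[OF that] Nx_Ny_disjoint assms(3) unfolding f_def by auto
  have bound: "1 - (1 - \<alpha>) * (real d + 1 - ((\<Sum>u\<in>Nx. f u) - (\<Sum>w\<in>Ny. f w))) / real d \<le> W \<alpha>"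
  proof (rule transport_ge_test_function[OF assms(1,2) fx fy])
    show "f u - f w \<le> 1" if "u \<in> Nx" "w \<in> Ny" "E u w" for u w
      using that fNx fNy unfolding T_def by auto
  qed (simp_all add: fNx fNy)
  have "(\<Sum>u\<in>Nx. f u) = 2 * real (card S)"
    using fNx assms(3) finite_Nx by (simp add: sum.If_cases Int_absorb1)
  moreover have "(\<Sum>w\<in>Ny. f w) = real (card T) - real (card (Ny - T))"
    using fNy T finite_Ny by (simp add: sum.If_cases Int_absorb1 Diff_eq)
  moreover have "real (card (Ny - T)) = real d - 1 - real (card T)"
    using card_Diff_subset[OF T(2,1)] card_mono[OF finite_Ny T(1)] card_Ny d_pos by (simp add: of_nat_diff)
  moreover have "real (card T) + 1 \<le> real (card S)" using violation unfolding T_def by simp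
  ultimately have "real d + 1 - ((\<Sum>u\<in>Nx. f u) - (\<Sum>w\<in>Ny. f w)) \<le> 0" by linarith
  then have "(1 - \<alpha>) * (real d + 1 - ((\<Sum>u\<in>Nx. f u) - (\<Sum>w\<in>Ny. f w))) / real d \<le> 0"
    using assms(2) d_pos by (intro divide_nonpos_pos mult_nonneg_nonpos) auto
  with bound show ?thesis by linarith
qed

lemma closed_nbhds: "insert x (nbrs V E x) = {x, y} \<union> Nx" "insert y (nbrs V E y) = {x, y} \<union> Ny"
  using y_in_nbrs_x x_in_nbrs_y by auto

lemma x_y_notin_Nx_Ny: "x \<notin> Nx" "y \<notin> Nx" "x \<notin> Ny" "y \<notin> Ny"
  using nbrs_irrefl[OF simple] by auto

lemma bij_closed_nbhds_of_matching:
  assumes "inj_on \<sigma> Nx" "\<And>u. u \<in> Nx \<Longrightarrow> \<sigma> u \<in> Ny \<and> E u (\<sigma> u)"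
  shows "bij_betw (\<lambda>z. if z \<in> Nx then \<sigma> z else z) (insert x (nbrs V E x)) (insert y (nbrs V E y))"
proof -
  let ?\<tau> = "\<lambda>z. if z \<in> Nx then \<sigma> z else z"
  have "\<sigma> ` Nx \<subseteq> Ny" using assms(2) by auto
  moreover have "card (\<sigma> ` Nx) = card Ny" using card_image[OF assms(1)] card_Nx card_Ny by simp
  ultimately have "\<sigma> ` Nx = Ny" by (rule card_subset_eq[OF finite_Ny])
  then have "bij_betw \<sigma> Nx Ny" using assms(1) by (simp add: bij_betw_def)
  then have bij_Nx: "bij_betw ?\<tau> Nx Ny" by (rule bij_betw_cong[THEN iffD1, rotated]) simp
  have "bij_betw id {x, y} {x, y}" by simp
  then have bij_xy: "bij_betw ?\<tau> {x, y} {x, y}"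
    by (rule bij_betw_cong[THEN iffD1, rotated]) (auto simp only: x_y_notin_Nx_Ny if_False id_apply)
  have "{x, y} \<inter> Ny = {}" using x_y_notin_Nx_Ny(3,4) by blast
  then have "bij_betw ?\<tau> ({x, y} \<union> Nx) ({x, y} \<union> Ny)" by (rule bij_betw_combine[OF bij_xy bij_Nx])
  then show ?thesis by (simp only: closed_nbhds)
qed

text \<open>At \<open>\<alpha> = 1/(d + 1)\<close> both walks are uniform on the closed neighbourhoods, and the
  matching, extended by the identity on \<open>x\<close> and \<open>y\<close>, moves \<open>d - 1\<close> of the \<open>d + 1\<close> atoms
  along an edge.\<close>
lemma transport_uniform_le_of_matching:
  assumes "inj_on \<sigma> Nx" "\<And>u. u \<in> Nx \<Longrightarrow> \<sigma> u \<in> Ny \<and> E u (\<sigma> u)"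
  shows "W (1 / (real d + 1)) \<le> (real d - 1) / (real d + 1)"
proof -
  let ?\<tau> = "\<lambda>z. if z \<in> Nx then \<sigma> z else z"
  have "?\<tau> x = x" "?\<tau> y = y" by (simp_all only: x_y_notin_Nx_Ny(1,2) if_False)
  have "{x, y} \<inter> Nx = {}" using x_y_notin_Nx_Ny(1,2) by blast
  then have "(\<Sum>a\<in>insert x (nbrs V E x). real (gdist V E a (?\<tau> a)))
      = (\<Sum>a\<in>{x, y}. real (gdist V E a (?\<tau> a))) + (\<Sum>u\<in>Nx. real (gdist V E u (?\<tau> u)))"
    unfolding closed_nbhds by (intro sum.union_disjoint) (simp_all add: finite_nbrs)
  also have "(\<Sum>a\<in>{x, y}. real (gdist V E a (?\<tau> a))) = 0"
    using x_ne_y x_in_V y_in_V \<open>?\<tau> x = x\<close> \<open>?\<tau> y = y\<close> by (simp add: gdist_self)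
  also have "(\<Sum>u\<in>Nx. real (gdist V E u (?\<tau> u))) = (\<Sum>u\<in>Nx. 1)"
    using assms(2) gdist_edge[OF simple connected] by (intro sum.cong) auto
  finally have cost: "(\<Sum>a\<in>insert x (nbrs V E x). real (gdist V E a (?\<tau> a))) = real d - 1"
    using card_Nx d_pos by (simp add: of_nat_diff)
  have nbhd_V: "insert z (nbrs V E z) \<subseteq> V" if "z \<in> V" for z
    using that unfolding nbrs_def by auto
  have "W (1 / (real d + 1))
      \<le> 1 / (real d + 1) * (\<Sum>a\<in>insert x (nbrs V E x). real (gdist V E a (?\<tau> a)))"
    unfolding lazy_walk_uniform[OF deg_x d_pos] lazy_walk_uniform[OF deg_y d_pos]
    by (rule transport_le_bij[OF finite_V nbhd_V[OF x_in_V] bij_closed_nbhds_of_matching[OF assms]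
          nbhd_V[OF y_in_V]]) auto
  with cost show ?thesis by simp
qed

lemma transport_upper_bound_of_matching:
  assumes "inj_on \<sigma> Nx" "\<And>u. u \<in> Nx \<Longrightarrow> \<sigma> u \<in> Ny \<and> E u (\<sigma> u)"
    and "1 / (real d + 1) \<le> \<alpha>" "\<alpha> < 1"
  shows "W \<alpha> \<le> 1 - 2 * (1 - \<alpha>) / real d"
proof -
  define \<alpha>0 where "\<alpha>0 = 1 / (real d + 1)"
  define t where "t = (1 - \<alpha>) / (1 - \<alpha>0)"
  have "real d \<noteq> 0" "real d + 1 \<noteq> 0" using d_pos by simp_all
  have "1 - \<alpha>0 = real d / (real d + 1)"
    unfolding \<alpha>0_def using \<open>real d + 1 \<noteq> 0\<close> by (simp add: field_simps)
  then have t: "t = (1 - \<alpha>) * (real d + 1) / real d" "0 \<le> t"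
    unfolding t_def using assms(4) by simp_all
  have "W \<alpha> \<le> t * W \<alpha>0 + (1 - t) * real (gdist V E x y)"
    unfolding t_def using transport_lazy_walk_mix[OF simple x_in_V y_in_V _ _ _ _ assms(4), of \<alpha>0]
      assms(3) d_pos deg_x deg_y unfolding \<alpha>0_def by simp
  also have "\<dots> \<le> t * ((real d - 1) / (real d + 1)) + (1 - t)"
    using mult_left_mono[OF transport_uniform_le_of_matching[OF assms(1,2)] t(2)] gdist_xy
    unfolding \<alpha>0_def by simp
  also have "\<dots> = 1 - 2 * (1 - \<alpha>) / real d"
    using t(1) \<open>real d \<noteq> 0\<close> \<open>real d + 1 \<noteq> 0\<close> by (simp add: field_simps)
  finally show ?thesis .
qed

lemma kappa_alpha_eq: "kappa_alpha V E \<alpha> x y = 1 - W \<alpha>"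
  unfolding kappa_alpha_def gdist_xy by simp

lemma kappa_LLY_of_matching:
  assumes "inj_on \<sigma> Nx" "\<And>u. u \<in> Nx \<Longrightarrow> \<sigma> u \<in> Ny \<and> E u (\<sigma> u)"
  shows "kappa_LLY V E x y = 2 / real d"
proof (rule kappa_LLY_eqI)
  have "eventually (\<lambda>\<alpha>. \<alpha> \<in> {1 / (real d + 1)<..<1}) (at_left (1::real))"
    by (rule eventually_at_left_real) (use d_pos in \<open>simp add: field_simps\<close>)
  then show "eventually (\<lambda>\<alpha>. kappa_alpha V E \<alpha> x y / (1 - \<alpha>) = 2 / real d) (at_left 1)"
  proof eventually_elim
    case (elim \<alpha>)
    then have \<alpha>: "1 / (real d + 1) < \<alpha>" "\<alpha> < 1" by auto
    moreover have "0 \<le> 1 / (real d + 1)" by simp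
    ultimately have "0 \<le> \<alpha>" by linarith
    then have "W \<alpha> = 1 - 2 * (1 - \<alpha>) / real d"
      using transport_lower_bound[of \<alpha>] transport_upper_bound_of_matching[OF assms, of \<alpha>] \<alpha>
      by (intro antisym) simp_all
    then show ?case using \<alpha>(2) d_pos unfolding kappa_alpha_eq by (simp add: field_simps)
  qed
qed

lemma kappa_LLY_nonpos_of_Hall_violation:
  assumes "S \<subseteq> Nx" "card {w \<in> Ny. \<exists>u\<in>S. E u w} < card S"
  shows "kappa_LLY V E x y \<le> 0"
  using transport_ge_1_of_Hall_violation[OF _ _ assms] deg_x deg_y d_pos
  by (intro kappa_LLY_nonpos[OF simple x_in_V y_in_V]) (simp_all add: kappa_alpha_eq)

lemma kappa_LLY_pos_imp_eq:
  assumes "kappa_LLY V E x y > 0"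
  shows "kappa_LLY V E x y = 2 / real d"
proof (cases "hall_condition Nx (\<lambda>u. {w \<in> Ny. E u w})")
  case True
  have "\<exists>\<sigma>. distinct_representatives Nx (\<lambda>u. {w \<in> Ny. E u w}) \<sigma>"
    by (rule Hall_marriage[OF finite_Nx _ True]) (rule finite_subset[OF _ finite_Ny], blast)
  then obtain \<sigma> where "inj_on \<sigma> Nx" "\<forall>u\<in>Nx. \<sigma> u \<in> {w \<in> Ny. E u w}"
    unfolding distinct_representatives_def by blast
  then show ?thesis by (intro kappa_LLY_of_matching) auto
next
  case False
  then obtain S where "S \<subseteq> Nx" "card (\<Union>u\<in>S. {w \<in> Ny. E u w}) < card S"
    unfolding hall_condition_def by (auto simp: not_le)
  moreover have "(\<Union>u\<in>S. {w \<in> Ny. E u w}) = {w \<in> Ny. \<exists>u\<in>S. E u w}" by auto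
  ultimately have "kappa_LLY V E x y \<le> 0" using kappa_LLY_nonpos_of_Hall_violation by auto
  with assms show ?thesis by simp
qed

end

theorem proposition2p4:
  fixes V :: "'a set" and E :: "'a \<Rightarrow> 'a \<Rightarrow> bool" and d :: nat
  assumes "simple_graph V E"
    and "connected_graph V E"
    and "regular V E d"
    and "\<not> has_cycle V E 3"
    and "\<not> has_cycle V E 5"
    and "\<forall>x y. E x y \<longrightarrow> kappa_LLY V E x y > 0"
  shows "\<forall>x y. E x y \<longrightarrow> kappa_LLY V E x y = 2 / real d"
proof (intro allI impI)
  fix x y assume "E x y"
  then interpret C3_C5_free_regular_edge V E d x y
    using assms(1-5) by unfold_locales
  show "kappa_LLY V E x y = 2 / real d"
    using kappa_LLY_pos_imp_eq assms(6) \<open>E x y\<close> by blast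
qed

end
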